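(* Let $n\ge3$ and let $L^B$ be a blow-up of $L\cong\mathbf{2}^n$. Let $x,y$ be vertices of $G(L^B)$ with $[x]\neq[y]$. If $x$ and $y$ are comparable, or if $x\wedge y=0$, then $x$ and $y$ are not mutually maximally distant in $G(L^B)$.
   Context: Blow-up: for the Boolean lattice $L\cong\mathbf{2}^n$ with atoms $q_1,\dots,q_n$, replace each $a\in L\setminus\{0,1\}$ by a finite chain $C_a$: $a=a^1\lessdot\cdots\lessdot a^{k_a}$ ($k_a\ge 1$), keep $0,1$; elements of one chain are ordered along it, and for $u\in C_a,v\in C_b$ with $a\ne b$ ($C_0=\{0\},C_1=\{1\}$), $u\le v$ iff $a<b$ in $L$. $G(L^B)$ is the zero-divisor graph: vertices are nonzero $a\in L^B$ having some nonzero $b$ with $a\wedge b=0$, distinct vertices adjacent iff their meet is $0$. $[x]$ denotes the class of $x$ under $x\sim y\iff x^\perp=y^\perp$, where $x^\perp=\{z: x\wedge z=0\}$. In a graph, $u$ is maximally distant from $v$ if $d(v,w)\le d(u,v)$ for every neighbour $w$ of $u$; $u,v$ are mutually maximally distant if each is maximally distant from the other. *)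

theory Defs
  imports Main "HOL-Library.Extended_Nat"
begin

text \<open>The Boolean lattice 2^n is modelled as the subsets of {..<n} (atoms {i}).
  An element of the blow-up is a pair (a, i): the i-th element (1-based) of the chain C_a.\<close>

type_synonym bu = "nat set \<times> nat"

definition blowup :: "nat \<Rightarrow> (nat set \<Rightarrow> nat) \<Rightarrow> bu set" where
  "blowup n k = {(a, i). a \<subseteq> {..<n} \<and>
      (if a = {} \<or> a = {..<n} then i = 1 else 1 \<le> i \<and> i \<le> k a)}"

definition bu_le :: "bu \<Rightarrow> bu \<Rightarrow> bool" where
  "bu_le u v \<longleftrightarrow> (fst u = fst v \<and> snd u \<le> snd v) \<or> fst u \<subset> fst v"

definition bu_zero :: bu where
  "bu_zero = ({}, 1)"

definition meet_zero :: "nat \<Rightarrow> (nat set \<Rightarrow> nat) \<Rightarrow> bu \<Rightarrow> bu \<Rightarrow> bool" where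
  "meet_zero n k x y \<longleftrightarrow>
     (\<forall>z \<in> blowup n k. bu_le z x \<and> bu_le z y \<longrightarrow> z = bu_zero)"

definition perp :: "nat \<Rightarrow> (nat set \<Rightarrow> nat) \<Rightarrow> bu \<Rightarrow> bu set" where
  "perp n k x = {z \<in> blowup n k. meet_zero n k x z}"

definition zd_vertices :: "nat \<Rightarrow> (nat set \<Rightarrow> nat) \<Rightarrow> bu set" where
  "zd_vertices n k = {x \<in> blowup n k. x \<noteq> bu_zero \<and>
      (\<exists>y \<in> blowup n k. y \<noteq> bu_zero \<and> meet_zero n k x y)}"

definition zd_edges :: "nat \<Rightarrow> (nat set \<Rightarrow> nat) \<Rightarrow> (bu \<times> bu) set" where
  "zd_edges n k = {(x, y). x \<in> zd_vertices n k \<and> y \<in> zd_vertices n k \<and> x \<noteq> y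
      \<and> meet_zero n k x y}"

definition zd_dist :: "nat \<Rightarrow> (nat set \<Rightarrow> nat) \<Rightarrow> bu \<Rightarrow> bu \<Rightarrow> enat" where
  "zd_dist n k u v = Inf (enat ` {m. (u, v) \<in> (zd_edges n k) ^^ m})"

definition max_distant :: "nat \<Rightarrow> (nat set \<Rightarrow> nat) \<Rightarrow> bu \<Rightarrow> bu \<Rightarrow> bool" where
  "max_distant n k u v \<longleftrightarrow>
     (\<forall>w. (u, w) \<in> zd_edges n k \<longrightarrow> zd_dist n k v w \<le> zd_dist n k u v)"

definition mutually_max_distant :: "nat \<Rightarrow> (nat set \<Rightarrow> nat) \<Rightarrow> bu \<Rightarrow> bu \<Rightarrow> bool" where
  "mutually_max_distant n k u v \<longleftrightarrow> max_distant n k u v \<and> max_distant n k v u"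

end

theory Submission
  imports Defs
begin

text \<open>In the blow-up two elements meet in 0 exactly when their underlying elements of the
  Boolean lattice are disjoint, so adjacency and the classes [x] only see underlying sets,
  and [x] \<noteq> [y] means these sets differ. If x < y, then x and y have the common neighbour
  (complement of y), while the neighbour (complement of x) of x is at distance 3 from y:
  a common neighbour of it and y would avoid both x and its complement. If x and y are
  adjacent, a neighbour of one of them that meets the other without being equal to it is
  at distance 2 from the other; when both are atoms the coatom opposite x serves, as
  n \<ge> 3 makes it differ from the atom y.\<close>

lemma blowup_base_subset: "u \<in> blowup n k \<Longrightarrow> fst u \<subseteq> {..<n}"
  by (auto simp: blowup_def)

lemma blowup_eq_zero_iff: "u \<in> blowup n k \<Longrightarrow> u = bu_zero \<longleftrightarrow> fst u = {}"
  by (cases u) (auto simp: blowup_def bu_zero_def)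

lemma zd_dist_le_relpow: "(u, v) \<in> zd_edges n k ^^ m \<Longrightarrow> zd_dist n k u v \<le> enat m"
  unfolding zd_dist_def by (rule Inf_lower) auto

lemma zd_dist_ge_if_no_shorter_walk:
  "(\<And>j. j < m \<Longrightarrow> (u, v) \<notin> zd_edges n k ^^ j) \<Longrightarrow> enat m \<le> zd_dist n k u v"
  unfolding zd_dist_def by (auto intro!: Inf_greatest) (meson not_le)

lemma exists_separating_subset:
  fixes p q :: "nat set"
  assumes "n \<ge> 3" and "p \<subseteq> {..<n}" "q \<subseteq> {..<n}" "p \<inter> q = {}" "q \<noteq> {}"
    and "(\<nexists>e. q = {e}) \<or> (\<exists>a. p = {a})"
  obtains c where "c \<subseteq> {..<n} - p" "c \<inter> q \<noteq> {}" "c \<noteq> q"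
proof (cases "\<exists>e. q = {e}")
  case False
  then obtain e where "e \<in> q" "q \<noteq> {e}"
    using \<open>q \<noteq> {}\<close> by blast
  then show thesis
    using assms(3,4) by (intro that[of "{e}"]) auto
next
  case True
  then obtain a e where p: "p = {a}" and q: "q = {e}"
    using assms(6) by blast
  have "card ({..<n} - p) = n - 1"
    using p assms(2) by (simp add: card_Diff_singleton)
  then have "card ({..<n} - p) \<noteq> card q"
    using q assms(1) by simp
  then have "{..<n} - p \<noteq> q"
    by metis
  moreover have "({..<n} - p) \<inter> q = q"
    using assms(3,4) by blast
  ultimately show thesis
    using \<open>q \<noteq> {}\<close> by (intro that[of "{..<n} - p"]) auto
qed

locale blowup_lattice =
  fixes n :: nat and k :: "nat set \<Rightarrow> nat"
  assumes chains_nonempty: "\<And>a. a \<subseteq> {..<n} \<Longrightarrow> a \<noteq> {} \<Longrightarrow> a \<noteq> {..<n} \<Longrightarrow> k a \<ge> 1"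
begin

lemma chain_bottom_in_blowup: "c \<subseteq> {..<n} \<Longrightarrow> (c, 1) \<in> blowup n k"
  using chains_nonempty by (auto simp: blowup_def)

lemma meet_zero_iff_disjoint:
  assumes u: "u \<in> blowup n k" and v: "v \<in> blowup n k"
  shows "meet_zero n k u v \<longleftrightarrow> fst u \<inter> fst v = {}"
proof
  assume mz: "meet_zero n k u v"
  let ?c = "fst u \<inter> fst v"
  have "(?c, 1) \<in> blowup n k"
    using blowup_base_subset[OF u] by (intro chain_bottom_in_blowup) auto
  moreover have "bu_le (?c, 1) u" "bu_le (?c, 1) v"
    using u v by (auto simp: bu_le_def blowup_def split: if_splits)
  ultimately show "?c = {}"
    using mz by (auto simp: meet_zero_def bu_zero_def)
next
  assume "fst u \<inter> fst v = {}"
  then show "meet_zero n k u v"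
    by (auto simp: meet_zero_def bu_le_def blowup_eq_zero_iff)
qed

lemma zd_vertex_iff:
  "u \<in> zd_vertices n k \<longleftrightarrow> u \<in> blowup n k \<and> fst u \<noteq> {} \<and> fst u \<noteq> {..<n}"
proof
  assume u: "u \<in> zd_vertices n k"
  then have ub: "u \<in> blowup n k" and "fst u \<noteq> {}"
    by (auto simp: zd_vertices_def blowup_eq_zero_iff)
  from u obtain v where v: "v \<in> blowup n k" "v \<noteq> bu_zero" and "meet_zero n k u v"
    unfolding zd_vertices_def by blast
  then have "fst v \<noteq> {}" "fst v \<subseteq> {..<n}" "fst u \<inter> fst v = {}"
    using blowup_eq_zero_iff blowup_base_subset meet_zero_iff_disjoint[OF ub] by auto
  then show "u \<in> blowup n k \<and> fst u \<noteq> {} \<and> fst u \<noteq> {..<n}"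
    using ub \<open>fst u \<noteq> {}\<close> by blast
next
  assume u: "u \<in> blowup n k \<and> fst u \<noteq> {} \<and> fst u \<noteq> {..<n}"
  define v where "v = ({..<n} - fst u, 1::nat)"
  have v: "v \<in> blowup n k"
    unfolding v_def by (rule chain_bottom_in_blowup) auto
  have "v \<noteq> bu_zero"
    using u blowup_base_subset[of u] blowup_eq_zero_iff[OF v] by (auto simp: v_def)
  moreover have "u \<noteq> bu_zero"
    using u blowup_eq_zero_iff by blast
  moreover have "meet_zero n k u v"
    using meet_zero_iff_disjoint[OF _ v, of u] u by (auto simp: v_def)
  ultimately show "u \<in> zd_vertices n k"
    unfolding zd_vertices_def using u v by blast
qed

lemma zd_vertex_base_subset: "u \<in> zd_vertices n k \<Longrightarrow> fst u \<subseteq> {..<n}"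
  unfolding zd_vertex_iff by (blast dest: blowup_base_subset)

lemma zd_edge_iff:
  "(u, v) \<in> zd_edges n k \<longleftrightarrow>
     u \<in> zd_vertices n k \<and> v \<in> zd_vertices n k \<and> fst u \<inter> fst v = {}"
  by (auto simp: zd_edges_def zd_vertex_iff meet_zero_iff_disjoint)

lemma chain_bottom_zd_vertex:
  "c \<subseteq> {..<n} \<Longrightarrow> c \<noteq> {} \<Longrightarrow> c \<noteq> {..<n} \<Longrightarrow> (c, 1) \<in> zd_vertices n k"
  using chain_bottom_in_blowup[of c] by (simp add: zd_vertex_iff)

lemma perp_eq_if_same_base:
  assumes "x \<in> blowup n k" "y \<in> blowup n k" "fst x = fst y"
  shows "perp n k x = perp n k y"
  using assms by (auto simp: perp_def meet_zero_iff_disjoint)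

lemma adjacent_not_max_distant:
  assumes u: "u \<in> zd_vertices n k" and "v \<in> zd_vertices n k"
    and "fst u \<inter> fst v = {}"
    and c: "c \<subseteq> {..<n} - fst u" "c \<inter> fst v \<noteq> {}" "c \<noteq> fst v"
  shows "\<not> max_distant n k u v"
proof -
  let ?w = "(c, 1)"
  have w: "?w \<in> zd_vertices n k"
    using c u zd_vertex_base_subset[OF u] by (intro chain_bottom_zd_vertex) (auto simp: zd_vertex_iff)
  have uw: "(u, ?w) \<in> zd_edges n k"
    using u w c by (auto simp: zd_edge_iff)
  have "zd_dist n k u v \<le> enat 1"
    using assms by (intro zd_dist_le_relpow) (simp add: zd_edge_iff)
  also have "\<dots> < enat 2"
    by simp
  also have "enat 2 \<le> zd_dist n k v ?w"
  proof (rule zd_dist_ge_if_no_shorter_walk)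
    fix j :: nat assume "j < 2"
    then have "j = 0 \<or> j = 1" by auto
    then show "(v, ?w) \<notin> zd_edges n k ^^ j"
      using c by (auto simp: zd_edge_iff)
  qed
  finally show ?thesis
    using uw unfolding max_distant_def by (meson not_le)
qed

lemma disjoint_not_max_distant:
  assumes "n \<ge> 3" and u: "u \<in> zd_vertices n k" and v: "v \<in> zd_vertices n k"
    and disj: "fst u \<inter> fst v = {}" and "(\<nexists>e. fst v = {e}) \<or> (\<exists>a. fst u = {a})"
  shows "\<not> max_distant n k u v"
proof -
  have "fst v \<noteq> {}"
    using v by (simp add: zd_vertex_iff)
  with assms obtain c where "c \<subseteq> {..<n} - fst u" "c \<inter> fst v \<noteq> {}" "c \<noteq> fst v"
    by (elim exists_separating_subset) (simp_all add: zd_vertex_base_subset)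
  then show ?thesis
    by (rule adjacent_not_max_distant[OF u v disj])
qed

lemma below_not_max_distant:
  assumes u: "u \<in> zd_vertices n k" and v: "v \<in> zd_vertices n k"
    and sub: "fst u \<subset> fst v"
  shows "\<not> max_distant n k u v"
proof -
  let ?w = "({..<n} - fst u, 1)" and ?e = "({..<n} - fst v, 1)"
  have U: "fst u \<noteq> {}" "fst u \<subseteq> {..<n}" and V: "fst v \<noteq> {..<n}" "fst v \<subseteq> {..<n}"
    using zd_vertex_base_subset[OF u] zd_vertex_base_subset[OF v] u v by (auto simp: zd_vertex_iff)
  have w: "?w \<in> zd_vertices n k"
    using U V sub by (intro chain_bottom_zd_vertex) auto
  have e: "?e \<in> zd_vertices n k"
    using V sub by (intro chain_bottom_zd_vertex) auto
  have uw: "(u, ?w) \<in> zd_edges n k"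
    using u w by (auto simp: zd_edge_iff)
  have "(u, v) \<in> zd_edges n k ^^ 2"
  proof -
    have "(u, ?e) \<in> zd_edges n k" "(?e, v) \<in> zd_edges n k"
      using u v e sub by (auto simp: zd_edge_iff)
    then show ?thesis
      by (auto simp: numeral_2_eq_2)
  qed
  then have "zd_dist n k u v \<le> enat 2"
    by (rule zd_dist_le_relpow)
  also have "\<dots> < enat 3"
    by simp
  also have "enat 3 \<le> zd_dist n k v ?w"
  proof (rule zd_dist_ge_if_no_shorter_walk)
    fix j :: nat assume "j < 3"
    then have "j = 0 \<or> j = 1 \<or> j = 2" by auto
    moreover have "fst v \<inter> ({..<n} - fst u) \<noteq> {}"
      using V sub by auto
    moreover have "v \<noteq> ?w"
      using U sub by auto
    moreover have "(v, ?w) \<notin> zd_edges n k O zd_edges n k"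
    proof
      assume "(v, ?w) \<in> zd_edges n k O zd_edges n k"
      then obtain z where "(v, z) \<in> zd_edges n k" "(z, ?w) \<in> zd_edges n k"
        by blast
      then have "z \<in> blowup n k" "fst z \<noteq> {}" "fst z \<inter> fst v = {}" "fst z \<inter> ({..<n} - fst u) = {}"
        by (auto simp: zd_edge_iff zd_vertex_iff)
      then show False
        using sub blowup_base_subset[of z n k] by auto
    qed
    ultimately show "(v, ?w) \<notin> zd_edges n k ^^ j"
      by (auto simp: zd_edge_iff numeral_2_eq_2)
  qed
  finally show ?thesis
    using uw unfolding max_distant_def by (meson not_le)
qed

end

theorem mainTheorem5:
  fixes n :: nat and k :: "nat set \<Rightarrow> nat" and x y :: bu
  assumes "n \<ge> 3"
    and "\<forall>a. a \<subseteq> {..<n} \<and> a \<noteq> {} \<and> a \<noteq> {..<n} \<longrightarrow> k a \<ge> 1"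
    and "x \<in> zd_vertices n k" and "y \<in> zd_vertices n k"
    and "perp n k x \<noteq> perp n k y"
    and "bu_le x y \<or> bu_le y x \<or> meet_zero n k x y"
  shows "\<not> mutually_max_distant n k x y"
proof -
  interpret blowup_lattice n k
    using assms(2) by unfold_locales blast
  have X: "x \<in> blowup n k" "fst x \<noteq> {}" and Y: "y \<in> blowup n k" "fst y \<noteq> {}"
    using assms(3,4) by (auto simp: zd_vertex_iff)
  have "fst x \<noteq> fst y"
    using perp_eq_if_same_base[OF X(1) Y(1)] assms(5) by blast
  then consider "fst x \<subset> fst y" | "fst y \<subset> fst x" | "fst x \<inter> fst y = {}"
    using assms(6) meet_zero_iff_disjoint[OF X(1) Y(1)] by (auto simp: bu_le_def)
  then have "\<not> max_distant n k x y \<or> \<not> max_distant n k y x"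
  proof cases
    case 3
    show ?thesis
    proof (cases "(\<nexists>e. fst y = {e}) \<or> (\<exists>a. fst x = {a})")
      case True
      then show ?thesis
        using disjoint_not_max_distant[OF assms(1,3,4) 3] by blast
    next
      case False
      then show ?thesis
        using disjoint_not_max_distant[OF assms(1,4,3)] 3 by (blast intro: Int_commute)
    qed
  qed (use assms(3,4) below_not_max_distant in blast)+
  then show ?thesis
    unfolding mutually_max_distant_def by blast
qed

end
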